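(* Let $a>0$, $c>0$ and $b\ge 0$. Then the system $$\dot x=x(1-y+cx-axz),\qquad \dot y=y(-1+x),\qquad \dot z=z(-b+ax^2)$$ has no rational first integrals.
   Context: A rational first integral is a non-constant rational function $H\in\mathbb{C}(x,y,z)$ with $\mathcal{X}H=0$, where $\mathcal{X}=x(1-y+cx-axz)\partial_x+y(-1+x)\partial_y+z(-b+ax^2)\partial_z$. *)

theory Defs
  imports "HOL-Analysis.Analysis"
begin

definition poly3 :: "(complex \<Rightarrow> complex \<Rightarrow> complex \<Rightarrow> complex) \<Rightarrow> bool" where
  "poly3 F \<longleftrightarrow> (\<exists>(N::nat) (c :: nat \<Rightarrow> nat \<Rightarrow> nat \<Rightarrow> complex).
     \<forall>x y z. F x y z = (\<Sum>i\<le>N. \<Sum>j\<le>N. \<Sum>k\<le>N. c i j k * x ^ i * y ^ j * z ^ k))"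

definition vfX :: "real \<Rightarrow> real \<Rightarrow> real \<Rightarrow> (complex \<Rightarrow> complex \<Rightarrow> complex \<Rightarrow> complex)
    \<Rightarrow> complex \<Rightarrow> complex \<Rightarrow> complex \<Rightarrow> complex" where
  "vfX a b c F x y z =
     x * (1 - y + of_real c * x - of_real a * x * z) * deriv (\<lambda>t. F t y z) x
   + y * (-1 + x) * deriv (\<lambda>t. F x t z) y
   + z * (- of_real b + of_real a * x ^ 2) * deriv (\<lambda>t. F x y t) z"

text \<open>H = P/Q in C(x,y,z) (Q a nonzero polynomial) is a rational first integral iff
it is non-constant and X H = 0; both are checked on the dense open set where Q does not vanish.\<close>
definition rational_first_integral :: "real \<Rightarrow> real \<Rightarrow> real \<Rightarrow>
    (complex \<Rightarrow> complex \<Rightarrow> complex \<Rightarrow> complex) \<Rightarrow> (complex \<Rightarrow> complex \<Rightarrow> complex \<Rightarrow> complex) \<Rightarrow> bool" where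
  "rational_first_integral a b c P Q \<longleftrightarrow>
     poly3 P \<and> poly3 Q \<and> (\<exists>x y z. Q x y z \<noteq> 0) \<and>
     \<not> (\<exists>k. \<forall>x y z. Q x y z \<noteq> 0 \<longrightarrow> P x y z / Q x y z = k) \<and>
     (\<forall>x y z. Q x y z \<noteq> 0 \<longrightarrow> vfX a b c (\<lambda>x y z. P x y z / Q x y z) x y z = 0)"

end

theory Submission
  imports Defs "HOL-Computational_Algebra.Polynomial"
begin

text \<open>
  If \<open>P/Q\<close> is a first integral, the polynomial \<open>Q X(P) - P X(Q)\<close> vanishes. Since
  \<open>X(z) = z (-b + a x\<^sup>2)\<close> and \<open>X(x) = x (1 - y + c x)\<close>, splitting off the largest power of
  \<open>z\<close>, and then of \<open>x\<close>, from \<open>P\<close> and \<open>Q\<close> and comparing top degrees (in \<open>x\<close>, using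
  \<open>a \<noteq> 0\<close>, and then in \<open>y\<close>) shows that the lowest terms of \<open>P\<close> and \<open>Q\<close>, for the order
  comparing powers of \<open>z\<close> first and of \<open>x\<close> second, sit at the same position; what remains there
  is \<open>y (u v' - v u') = 0\<close> for their coefficients \<open>u, v \<in> \<complex>[y]\<close>, so \<open>u = \<mu> v\<close>. Then
  \<open>P - \<mu> Q\<close> is again a solution whose lowest term would have to sit at the same position, where
  it vanishes; hence \<open>P = \<mu> Q\<close>.\<close>

definition is_derivation :: "('a::comm_ring_1 \<Rightarrow> 'a) \<Rightarrow> bool" where
  "is_derivation d \<longleftrightarrow> (\<forall>x y. d (x + y) = d x + d y) \<and> (\<forall>x y. d (x * y) = d x * y + x * d y)"

lemma
  assumes "is_derivation d"
  shows derivation_add: "d (x + y) = d x + d y"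
    and derivation_mult: "d (x * y) = d x * y + x * d y"
  using assms unfolding is_derivation_def by auto

lemma derivation_0: "is_derivation d \<Longrightarrow> d 0 = 0"
  using derivation_add[of d 0 0] by simp

lemma derivation_1: "is_derivation d \<Longrightarrow> d 1 = 0"
  using derivation_mult[of d 1 1] by simp

lemma derivation_diff: "is_derivation d \<Longrightarrow> d (x - y) = d x - d y"
  using derivation_add[of d "x - y" y] by (simp add: algebra_simps)

lemma derivation_sum: "is_derivation d \<Longrightarrow> d (sum f A) = (\<Sum>i\<in>A. d (f i))"
  by (induction A rule: infinite_finite_induct) (auto simp: derivation_0 derivation_add)

lemma derivation_power:
  assumes "is_derivation d"
  shows "d (x ^ n) = of_nat n * x ^ (n - 1) * d x"
proof (induction n)
  case 0
  show ?case by (simp add: derivation_1[OF assms])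
next
  case (Suc n)
  then show ?case
    by (cases n) (simp_all add: derivation_mult[OF assms] algebra_simps)
qed

lemma is_derivation_plus:
  "is_derivation d1 \<Longrightarrow> is_derivation d2 \<Longrightarrow> is_derivation (\<lambda>x. d1 x + d2 x)"
  unfolding is_derivation_def by (simp add: algebra_simps)

lemma is_derivation_mult_left:
  "is_derivation d \<Longrightarrow> is_derivation (\<lambda>x. a * d x)"
  unfolding is_derivation_def by (simp add: algebra_simps)

lemma is_derivation_pderiv: "is_derivation (pderiv :: 'a::idom poly \<Rightarrow> _)"
  unfolding is_derivation_def by (simp add: pderiv_add pderiv_mult)

lemma is_derivation_map_poly:
  assumes d: "is_derivation d"
  shows "is_derivation (map_poly d)"
  unfolding is_derivation_def
proof (intro conjI allI)
  have d0: "d 0 = 0" using derivation_0[OF d] .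
  show "map_poly d (p + q) = map_poly d p + map_poly d q" for p q
    by (rule poly_eqI) (simp add: coeff_map_poly d0 derivation_add[OF d])
  show "map_poly d (p * q) = map_poly d p * q + p * map_poly d q" for p q
  proof (rule poly_eqI)
    fix n
    have "coeff (map_poly d (p * q)) n = d (\<Sum>i\<le>n. coeff p i * coeff q (n - i))"
      by (simp add: coeff_map_poly d0 coeff_mult)
    also have "\<dots> = (\<Sum>i\<le>n. d (coeff p i) * coeff q (n - i)) + (\<Sum>i\<le>n. coeff p i * d (coeff q (n - i)))"
      by (simp add: derivation_sum[OF d] derivation_mult[OF d] sum.distrib)
    also have "\<dots> = coeff (map_poly d p * q + p * map_poly d q) n"
      by (simp add: coeff_mult coeff_map_poly d0)
    finally show "coeff (map_poly d (p * q)) n = coeff (map_poly d p * q + p * map_poly d q) n" .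
  qed
qed

lemma wronskian_shift:
  assumes "is_derivation d" and "d k = 0"
  shows "q * d (p - k * q) - (p - k * q) * d q = q * d p - p * d q"
  using assms by (simp add: derivation_diff derivation_mult algebra_simps)

lemma wronskian_power_factors:
  assumes d: "is_derivation d" and dX: "d X = X * G"
  shows "(X ^ n * q) * d (X ^ m * p) - (X ^ m * p) * d (X ^ n * q)
       = X ^ m * X ^ n * (q * d p - p * d q + (of_nat m - of_nat n) * G * p * q)"
proof -
  have "d (X ^ k) = of_nat k * X ^ k * G" for k
    using derivation_power[OF d, of X k] dX by (cases k) (simp_all add: algebra_simps)
  then show ?thesis
    by (simp add: derivation_mult[OF d] algebra_simps)
qed

lemma order_0_factor:
  fixes p :: "'a::idom poly"
  assumes "p \<noteq> 0"
  obtains p1 where "p = [:0, 1:] ^ order 0 p * p1" and "coeff p1 0 = coeff p (order 0 p)"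
    and "coeff p1 0 \<noteq> 0"
proof -
  obtain p1 where p: "p = [:0, 1:] ^ order 0 p * p1" and "\<not> [:0, 1:] dvd p1"
    using order_decomp[OF assms, of 0] by auto
  then have "coeff p1 0 \<noteq> 0"
    using dvd_iff_poly_eq_0[of 0 p1] by (simp add: poly_0_coeff_0)
  moreover have "coeff p (order 0 p) = coeff p1 0"
  proof -
    have "[:0, 1:] ^ order 0 p = monom (1::'a) (order 0 p)" by (simp add: monom_altdef)
    then show ?thesis by (subst p) (simp add: coeff_monom_mult)
  qed
  ultimately show ?thesis using that p by simp
qed

lemma coeff_order_0_nonzero: "p \<noteq> 0 \<Longrightarrow> coeff p (order 0 p) \<noteq> 0"
  by (metis order_0_factor)

lemma degree_mult_pderiv_le:
  fixes u v :: "'a::{idom,semiring_char_0} poly"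
  shows "degree (u * pderiv v) \<le> degree u + degree v - 1"
proof (cases "degree v = 0")
  case True
  then show ?thesis by (simp add: pderiv_eq_0_iff[THEN iffD2])
next
  case False
  have "degree (u * pderiv v) \<le> degree u + degree (pderiv v)" by (rule degree_mult_le)
  with False show ?thesis by (simp add: degree_pderiv)
qed

lemma wronskian_plus_multiple_eq_0_imp:
  fixes d :: "'a::idom poly \<Rightarrow> 'a poly"
  assumes deg_d: "\<And>f. degree (d f) \<le> degree f + k" and deg_E: "degree E > k"
    and f: "f \<noteq> 0" and g: "g \<noteq> 0"
    and eq: "g * d f - f * d g + [:\<kappa>:] * E * f * g = 0"
  shows "\<kappa> = 0"
proof -
  define N where "N = degree E + degree f + degree g"
  have "degree (g * d f) < N" "degree (f * d g) < N"
    using degree_mult_le[of g "d f"] degree_mult_le[of f "d g"] deg_d[of f] deg_d[of g] deg_E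
    unfolding N_def by linarith+
  then have "coeff (g * d f - f * d g) N = 0" by (simp add: coeff_eq_0)
  moreover have "E \<noteq> 0" using deg_E by auto
  then have "degree (E * f * g) = N" using f g by (simp add: N_def degree_mult_eq)
  then have "coeff (E * f * g) N = lead_coeff E * lead_coeff f * lead_coeff g"
    by (metis lead_coeff_mult)
  ultimately have "\<kappa> * (lead_coeff E * lead_coeff f * lead_coeff g) = 0"
    using arg_cong[OF eq, of "\<lambda>h. coeff h N"] by (simp add: mult.assoc)
  with \<open>E \<noteq> 0\<close> f g show ?thesis by simp
qed

text \<open>
  With \<open>p = X\<^sup>m p\<^sub>1\<close> and \<open>q = X\<^sup>n q\<^sub>1\<close>, the Wronskian \<open>W(p, q) = q d p - p d q\<close> equals
  \<open>X\<^sup>m\<^sup>+\<^sup>n (W(p\<^sub>1, q\<^sub>1) + (m - n) G p\<^sub>1 q\<^sub>1)\<close>; comparing top degrees in its constant term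
  forces \<open>m = n\<close>.\<close>

lemma wronskian_lowest_coeffs:
  fixes d :: "'a::{idom,ring_char_0} poly poly \<Rightarrow> 'a poly poly"
  assumes der: "is_derivation d" and dX: "d [:0, 1:] = [:0, 1:] * G"
    and d0: "\<And>p. coeff (d p) 0 = d0 (coeff p 0)"
    and deg_d0: "\<And>f. degree (d0 f) \<le> degree f + k" and deg_G: "degree (coeff G 0) > k"
    and p: "p \<noteq> 0" and q: "q \<noteq> 0" and eq: "q * d p - p * d q = 0"
  shows "order 0 p = order 0 q"
    and "coeff q (order 0 q) * d0 (coeff p (order 0 p))
         - coeff p (order 0 p) * d0 (coeff q (order 0 q)) = 0"
proof -
  define m n where "m = order 0 p" and "n = order 0 q"
  define f g where "f = coeff p m" and "g = coeff q n"
  obtain p1 where p1: "p = [:0, 1:] ^ m * p1" "coeff p1 0 = f" and "f \<noteq> 0"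
    using order_0_factor[OF p] unfolding m_def f_def by metis
  obtain q1 where q1: "q = [:0, 1:] ^ n * q1" "coeff q1 0 = g" and "g \<noteq> 0"
    using order_0_factor[OF q] unfolding n_def g_def by metis
  have "q1 * d p1 - p1 * d q1 + (of_nat m - of_nat n) * G * p1 * q1 = 0"
    using eq wronskian_power_factors[OF der dX, of n q1 m p1] unfolding p1 q1 by simp
  then have "coeff (q1 * d p1 - p1 * d q1 + (of_nat m - of_nat n) * G * p1 * q1) 0 = 0"
    by simp
  then have W0: "g * d0 f - f * d0 g + [:of_nat m - of_nat n:] * coeff G 0 * f * g = 0"
    by (simp add: coeff_mult_0 d0 p1 q1 of_nat_poly)
  then have "(of_nat m :: 'a) - of_nat n = 0"
    using wronskian_plus_multiple_eq_0_imp[OF deg_d0 deg_G \<open>f \<noteq> 0\<close> \<open>g \<noteq> 0\<close>] by blast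
  then show "order 0 p = order 0 q" unfolding m_def n_def by simp
  with W0 show "g * d0 f - f * d0 g = 0" unfolding f_def g_def m_def n_def by simp
qed

lemma pderiv_wronskian_eq_0_imp_degree_eq:
  fixes u v :: "'a::{idom,semiring_char_0} poly"
  assumes u: "u \<noteq> 0" and v: "v \<noteq> 0" and eq: "u * pderiv v = v * pderiv u"
  shows "degree u = degree v"
proof (cases "degree u = 0 \<or> degree v = 0")
  case True
  then have "pderiv u = 0 \<or> pderiv v = 0" by (simp add: pderiv_eq_0_iff)
  with eq u v have "pderiv u = 0 \<and> pderiv v = 0" by auto
  then show ?thesis by (simp add: pderiv_eq_0_iff)
next
  case False
  have "coeff (u * pderiv v) (degree u + degree v - 1) = of_nat (degree v) * lead_coeff u * lead_coeff v"
    using coeff_mult_degree_sum[of u "pderiv v"] False by (simp add: degree_pderiv coeff_pderiv)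
  moreover have "coeff (v * pderiv u) (degree u + degree v - 1) = of_nat (degree u) * lead_coeff u * lead_coeff v"
    using coeff_mult_degree_sum[of v "pderiv u"] False
    by (simp add: degree_pderiv coeff_pderiv add.commute)
  ultimately have "(of_nat (degree v) :: 'a) = of_nat (degree u)"
    using eq u v by simp
  then show ?thesis by simp
qed

lemma pderiv_wronskian_eq_0_imp_smult:
  fixes u v :: "'a::field_char_0 poly"
  assumes v: "v \<noteq> 0" and eq: "u * pderiv v = v * pderiv u"
  shows "\<exists>\<mu>. u = smult \<mu> v"
proof (cases "u = 0")
  case True
  then show ?thesis by (intro exI[of _ 0]) simp
next
  case False
  define \<mu> where "\<mu> = lead_coeff u / lead_coeff v"
  define w where "w = u - smult \<mu> v"
  have deg: "degree u = degree v"
    using pderiv_wronskian_eq_0_imp_degree_eq[OF False v eq] .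
  have "w * pderiv v = v * pderiv w"
    using eq by (simp add: w_def pderiv_diff pderiv_smult algebra_simps)
  moreover have "coeff w (degree v) = 0"
    using v deg by (simp add: w_def \<mu>_def)
  ultimately have "w = 0"
    using pderiv_wronskian_eq_0_imp_degree_eq[OF _ v] by (metis leading_coeff_0_iff)
  then show ?thesis unfolding w_def by auto
qed

text \<open>
  A polynomial in \<open>x, y, z\<close> is an \<open>'a poly poly poly\<close> in \<open>z\<close> over \<open>x\<close> over \<open>y\<close>, so
  \<open>pderiv\<close>, \<open>map_poly pderiv\<close> and \<open>map_poly (map_poly pderiv)\<close> are \<open>\<partial>\<^sub>z\<close>, \<open>\<partial>\<^sub>x\<close> and
  \<open>\<partial>\<^sub>y\<close>. \<open>vf_der a b c\<close> is the vector field \<open>X\<close> acting as a derivation, and \<open>vf_der_z0 c\<close>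
  is its reduction modulo \<open>z\<close>, acting on \<open>\<complex>[y][x]\<close>.\<close>

definition vf_der_z0 :: "'a::idom \<Rightarrow> 'a poly poly \<Rightarrow> 'a poly poly" where
  "vf_der_z0 c f = [:0, 1 - [:0, 1:], [:c:]:] * pderiv f + [:- [:0, 1:], [:0, 1:]:] * map_poly pderiv f"

definition vf_der :: "'a::idom \<Rightarrow> 'a \<Rightarrow> 'a \<Rightarrow> 'a poly poly poly \<Rightarrow> 'a poly poly poly" where
  "vf_der a b c p =
     [:[:0, 1 - [:0, 1:], [:c:]:], [:0, 0, - [:a:]:]:] * map_poly pderiv p
   + [:[:- [:0, 1:], [:0, 1:]:]:] * map_poly (map_poly pderiv) p
   + [:0, [:- [:b:], 0, [:a:]:]:] * pderiv p"

lemma is_derivation_vf_der_z0: "is_derivation (vf_der_z0 c)"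
proof -
  have "vf_der_z0 c = (\<lambda>f. [:0, 1 - [:0, 1:], [:c:]:] * pderiv f + [:- [:0, 1:], [:0, 1:]:] * map_poly pderiv f)"
    by (rule ext) (simp add: vf_der_z0_def)
  then show ?thesis
    by (simp only:) (intro is_derivation_plus is_derivation_mult_left
        is_derivation_pderiv is_derivation_map_poly)
qed

lemma is_derivation_vf_der: "is_derivation (vf_der a b c)"
proof -
  have "vf_der a b c = (\<lambda>p. [:[:0, 1 - [:0, 1:], [:c:]:], [:0, 0, - [:a:]:]:] * map_poly pderiv p
     + [:[:- [:0, 1:], [:0, 1:]:]:] * map_poly (map_poly pderiv) p
     + [:0, [:- [:b:], 0, [:a:]:]:] * pderiv p)"
    by (rule ext) (simp add: vf_der_def)
  then show ?thesis
    by (simp only:) (intro is_derivation_plus is_derivation_mult_left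
        is_derivation_pderiv is_derivation_map_poly)
qed

lemma vf_der_z0_x: "vf_der_z0 c [:0, 1:] = [:0, 1:] * [:1 - [:0, 1:], [:c:]:]"
  by (simp add: vf_der_z0_def pderiv_pCons map_poly_pCons one_pCons)

lemma vf_der_z: "vf_der a b c [:0, 1:] = [:0, 1:] * [:[:- [:b:], 0, [:a:]:]:]"
  by (simp add: vf_der_def pderiv_pCons map_poly_pCons one_pCons)

lemma vf_der_const: "vf_der a b c [:[:[:\<mu>:]:]:] = 0"
  by (simp add: vf_der_def map_poly_pCons)

lemma coeff_vf_der_0: "coeff (vf_der a b c p) 0 = vf_der_z0 c (coeff p 0)"
  by (simp add: vf_der_def vf_der_z0_def coeff_mult_0 coeff_map_poly)

lemma coeff_vf_der_z0_0: "coeff (vf_der_z0 c f) 0 = - [:0, 1:] * pderiv (coeff f 0)"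
  by (simp add: vf_der_z0_def coeff_mult_0 coeff_map_poly)

lemma degree_vf_der_z0_le:
  fixes f :: "'a::{idom,ring_char_0} poly poly"
  shows "degree (vf_der_z0 c f) \<le> degree f + 1"
proof -
  define A B :: "'a poly poly" where "A = [:0, 1 - [:0, 1:], [:c:]:]" and "B = [:- [:0, 1:], [:0, 1:]:]"
  have "degree A \<le> 2" "degree B \<le> 1" by (simp_all add: A_def B_def)
  then have "degree (A * pderiv f) \<le> degree f + 1" "degree (B * map_poly pderiv f) \<le> degree f + 1"
    using degree_mult_pderiv_le[of A f] degree_mult_le[of B "map_poly pderiv f"]
      map_poly_degree_leq[of pderiv f] by linarith+
  then show ?thesis unfolding vf_der_z0_def A_def[symmetric] B_def[symmetric] by (meson degree_add_le)
qed

lemma vf_der_z0_wronskian_lowest: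
  fixes f g :: "'a::field_char_0 poly poly"
  assumes f: "f \<noteq> 0" and g: "g \<noteq> 0" and eq: "g * vf_der_z0 c f - f * vf_der_z0 c g = 0"
  shows "order 0 f = order 0 g"
    and "\<exists>\<mu>. coeff f (order 0 f) = smult \<mu> (coeff g (order 0 g))"
proof -
  have deg: "degree (- [:0, 1:] * pderiv u) \<le> degree u + 0" for u :: "'a poly"
    using degree_mult_pderiv_le[of "- [:0, 1:]" u] by simp
  have "degree (coeff [:1 - [:0, 1:], [:c:]:] 0) > 0" by (simp add: one_pCons)
  note lowest = wronskian_lowest_coeffs[OF is_derivation_vf_der_z0 vf_der_z0_x
      coeff_vf_der_z0_0 deg this f g eq]
  show "order 0 f = order 0 g" by (rule lowest(1))
  have "[:0, 1:] * (coeff f (order 0 f) * pderiv (coeff g (order 0 g))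
        - coeff g (order 0 g) * pderiv (coeff f (order 0 f))) = 0"
    using lowest(2) by (simp add: algebra_simps)
  then have "coeff f (order 0 f) * pderiv (coeff g (order 0 g))
           = coeff g (order 0 g) * pderiv (coeff f (order 0 f))"
    by simp
  then show "\<exists>\<mu>. coeff f (order 0 f) = smult \<mu> (coeff g (order 0 g))"
    using pderiv_wronskian_eq_0_imp_smult coeff_order_0_nonzero[OF g] by blast
qed

lemma vf_der_wronskian_lowest:
  fixes p q :: "'a::field_char_0 poly poly poly"
  assumes a: "a \<noteq> 0" and p: "p \<noteq> 0" and q: "q \<noteq> 0"
    and eq: "q * vf_der a b c p - p * vf_der a b c q = 0"
  shows "order 0 p = order 0 q"
    and "coeff q (order 0 q) * vf_der_z0 c (coeff p (order 0 p))
         - coeff p (order 0 p) * vf_der_z0 c (coeff q (order 0 q)) = 0"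
  using wronskian_lowest_coeffs[OF is_derivation_vf_der vf_der_z coeff_vf_der_0
      degree_vf_der_z0_le _ p q eq] a by simp_all

lemma vf_der_wronskian_eq_0_imp_const_multiple:
  fixes p q :: "'a::field_char_0 poly poly poly"
  assumes a: "a \<noteq> 0" and q: "q \<noteq> 0" and eq: "q * vf_der a b c p - p * vf_der a b c q = 0"
  shows "\<exists>\<mu>. p = [:[:[:\<mu>:]:]:] * q"
proof (rule ccontr)
  assume not_multiple: "\<nexists>\<mu>. p = [:[:[:\<mu>:]:]:] * q"
  define m where "m = order 0 q"
  define n where "n = order 0 (coeff q m)"
  have lowest: "coeff (coeff r m) n \<noteq> 0 \<and> (\<exists>\<mu>. coeff (coeff r m) n = smult \<mu> (coeff (coeff q m) n))"
    if r: "r \<noteq> 0" and eq_r: "q * vf_der a b c r - r * vf_der a b c q = 0" for r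
  proof -
    note z_lowest = vf_der_wronskian_lowest[OF a r q eq_r]
    have "coeff r m \<noteq> 0" "coeff q m \<noteq> 0"
      using coeff_order_0_nonzero[OF r] coeff_order_0_nonzero[OF q] z_lowest(1)
      by (simp_all add: m_def)
    note x_lowest = vf_der_z0_wronskian_lowest[OF this z_lowest(2)[unfolded z_lowest(1), folded m_def]]
    show ?thesis
      using x_lowest coeff_order_0_nonzero[OF \<open>coeff r m \<noteq> 0\<close>] z_lowest(1)
      by (simp add: m_def n_def)
  qed
  have "p \<noteq> 0" using not_multiple by (metis mult_zero_left pCons_0_0)
  then obtain \<mu> where \<mu>: "coeff (coeff p m) n = smult \<mu> (coeff (coeff q m) n)"
    using lowest eq by blast
  define r where "r = p - [:[:[:\<mu>:]:]:] * q"
  have "r \<noteq> 0" using not_multiple by (simp add: r_def)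
  moreover have "q * vf_der a b c r - r * vf_der a b c q = 0"
    unfolding r_def wronskian_shift[OF is_derivation_vf_der vf_der_const] by (rule eq)
  ultimately have "coeff (coeff r m) n \<noteq> 0" using lowest by blast
  then show False using \<mu> by (simp add: r_def)
qed

definition eval2 :: "'a::comm_semiring_0 poly poly \<Rightarrow> 'a \<Rightarrow> 'a \<Rightarrow> 'a" where
  "eval2 f x y = poly (poly f [:x:]) y"

definition eval3 :: "'a::comm_semiring_0 poly poly poly \<Rightarrow> 'a \<Rightarrow> 'a \<Rightarrow> 'a \<Rightarrow> 'a" where
  "eval3 p x y z = poly (poly (poly p [:[:z:]:]) [:x:]) y"

lemma eval2_pCons: "eval2 (pCons g f) x y = poly g y + x * eval2 f x y"
  by (simp add: eval2_def)

lemma eval2_0 [simp]: "eval2 0 x y = 0"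
  by (simp add: eval2_def)

lemma eval3_pCons: "eval3 (pCons f p) x y z = eval2 f x y + z * eval3 p x y z"
  by (simp add: eval3_def eval2_def)

lemma eval3_0 [simp]: "eval3 0 x y z = 0"
  and eval3_add [simp]: "eval3 (p + q) x y z = eval3 p x y z + eval3 q x y z"
  and eval3_mult [simp]: "eval3 (p * q) x y z = eval3 p x y z * eval3 q x y z"
  by (simp_all add: eval3_def)

lemma eval3_diff [simp]:
  fixes p q :: "'a::comm_ring poly poly poly"
  shows "eval3 (p - q) x y z = eval3 p x y z - eval3 q x y z"
  by (simp add: eval3_def)

lemma eval3_sum: "eval3 (sum f A) x y z = (\<Sum>i\<in>A. eval3 (f i) x y z)"
  by (simp add: eval3_def poly_sum)

lemma eval3_monom:
  fixes w :: "'a::comm_semiring_1"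
  shows "eval3 (monom (monom (monom w j) i) k) x y z = w * x ^ i * y ^ j * z ^ k"
  by (simp add: eval3_def poly_monom poly_power mult_ac)

lemma poly3_eval3:
  assumes "poly3 F"
  obtains p where "F = eval3 p"
proof -
  obtain N w where F: "\<And>x y z. F x y z = (\<Sum>i\<le>N. \<Sum>j\<le>N. \<Sum>k\<le>N. w i j k * x ^ i * y ^ j * z ^ k)"
    using assms unfolding poly3_def by blast
  have "F = eval3 (\<Sum>i\<le>N. \<Sum>j\<le>N. \<Sum>k\<le>N. monom (monom (monom (w i j k) j) i) k)"
    by (intro ext) (simp add: F eval3_sum eval3_monom)
  then show ?thesis by (rule that)
qed

lemma eval2_map_poly: "eval2 f x y = poly (map_poly (\<lambda>g. poly g y) f) x"
  by (induction f) (simp_all add: eval2_pCons map_poly_pCons)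

lemma eval3_map_poly: "eval3 p x y z = poly (map_poly (\<lambda>f. eval2 f x y) p) z"
  by (induction p) (simp_all add: eval3_pCons map_poly_pCons)

lemma eval2_eq_0_imp:
  fixes f :: "'a::{idom,ring_char_0} poly poly"
  assumes "\<And>x y. eval2 f x y = 0"
  shows "f = 0"
proof (rule poly_eqI)
  fix i
  have "map_poly (\<lambda>g. poly g y) f = 0" for y
    using assms poly_all_0_iff_0 unfolding eval2_map_poly by blast
  then have "poly (coeff f i) y = 0" for y
    by (metis coeff_0 coeff_map_poly poly_0)
  then show "coeff f i = coeff 0 i" using poly_all_0_iff_0 by auto
qed

lemma eval3_eq_0_imp:
  fixes p :: "'a::{idom,ring_char_0} poly poly poly"
  assumes "\<And>x y z. eval3 p x y z = 0"
  shows "p = 0"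
proof (rule poly_eqI)
  fix i
  have "map_poly (\<lambda>f. eval2 f x y) p = 0" for x y
    using assms poly_all_0_iff_0 unfolding eval3_map_poly by blast
  then have "eval2 (coeff p i) x y = 0" for x y
    by (metis coeff_0 coeff_map_poly eval2_0)
  then show "coeff p i = coeff 0 i" using eval2_eq_0_imp by auto
qed

lemma eval2_has_derivative_x:
  "((\<lambda>t. eval2 f t y) has_field_derivative eval2 (pderiv f) x y) (at x)"
proof (induction f)
  case (pCons g f)
  have "((\<lambda>t. poly g y + t * eval2 f t y) has_field_derivative
      0 + (1 * eval2 f x y + eval2 (pderiv f) x y * x)) (at x)"
    by (intro DERIV_add DERIV_const DERIV_mult DERIV_ident pCons.IH)
  then show ?case by (simp add: eval2_pCons pderiv_pCons eval2_def algebra_simps)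
qed (simp add: eval2_def)

lemma eval2_has_derivative_y:
  "((\<lambda>t. eval2 f x t) has_field_derivative eval2 (map_poly pderiv f) x y) (at y)"
proof (induction f)
  case (pCons g f)
  have "((\<lambda>t. poly g t + x * eval2 f x t) has_field_derivative
      poly (pderiv g) y + x * eval2 (map_poly pderiv f) x y) (at y)"
    by (intro DERIV_add poly_DERIV DERIV_cmult pCons.IH)
  then show ?case by (simp add: eval2_pCons map_poly_pCons)
qed (simp add: eval2_def)

lemma eval3_has_derivative_x:
  "((\<lambda>t. eval3 p t y z) has_field_derivative eval3 (map_poly pderiv p) x y z) (at x)"
proof (induction p)
  case (pCons f p)
  have "((\<lambda>t. eval2 f t y + z * eval3 p t y z) has_field_derivative
      eval2 (pderiv f) x y + z * eval3 (map_poly pderiv p) x y z) (at x)"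
    by (intro DERIV_add eval2_has_derivative_x DERIV_cmult pCons.IH)
  then show ?case by (simp add: eval3_pCons map_poly_pCons)
qed (simp add: eval3_def)

lemma eval3_has_derivative_y:
  "((\<lambda>t. eval3 p x t z) has_field_derivative eval3 (map_poly (map_poly pderiv) p) x y z) (at y)"
proof (induction p)
  case (pCons f p)
  have "((\<lambda>t. eval2 f x t + z * eval3 p x t z) has_field_derivative
      eval2 (map_poly pderiv f) x y + z * eval3 (map_poly (map_poly pderiv) p) x y z) (at y)"
    by (intro DERIV_add eval2_has_derivative_y DERIV_cmult pCons.IH)
  then show ?case by (simp add: eval3_pCons map_poly_pCons)
qed (simp add: eval3_def)

lemma eval3_has_derivative_z:
  "((\<lambda>t. eval3 p x y t) has_field_derivative eval3 (pderiv p) x y z) (at z)"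
proof (induction p)
  case (pCons f p)
  have "((\<lambda>t. eval2 f x y + t * eval3 p x y t) has_field_derivative
      0 + (1 * eval3 p x y z + eval3 (pderiv p) x y z * z)) (at z)"
    by (intro DERIV_add DERIV_const DERIV_mult DERIV_ident pCons.IH)
  then show ?case by (simp add: eval3_pCons pderiv_pCons algebra_simps)
qed (simp add: eval3_def)

lemma eval3_vf_der:
  "eval3 (vf_der a b c p) x y z =
     x * (1 - y + c * x - a * x * z) * eval3 (map_poly pderiv p) x y z
   + y * (-1 + x) * eval3 (map_poly (map_poly pderiv) p) x y z
   + z * (- b + a * x ^ 2) * eval3 (pderiv p) x y z"
  by (simp add: vf_der_def eval3_def algebra_simps power2_eq_square)

lemma vfX_eval3_divide:
  assumes q: "eval3 q x y z \<noteq> 0"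
  shows "vfX a b c (\<lambda>x y z. eval3 p x y z / eval3 q x y z) x y z =
    eval3 (q * vf_der (of_real a) (of_real b) (of_real c) p - p * vf_der (of_real a) (of_real b) (of_real c) q) x y z
    / (eval3 q x y z)\<^sup>2"
proof -
  have dx: "deriv (\<lambda>t. eval3 p t y z / eval3 q t y z) x =
      (eval3 (map_poly pderiv p) x y z * eval3 q x y z - eval3 p x y z * eval3 (map_poly pderiv q) x y z)
      / (eval3 q x y z * eval3 q x y z)"
    by (intro DERIV_imp_deriv DERIV_divide eval3_has_derivative_x q)
  have dy: "deriv (\<lambda>t. eval3 p x t z / eval3 q x t z) y =
      (eval3 (map_poly (map_poly pderiv) p) x y z * eval3 q x y z
        - eval3 p x y z * eval3 (map_poly (map_poly pderiv) q) x y z)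
      / (eval3 q x y z * eval3 q x y z)"
    by (intro DERIV_imp_deriv DERIV_divide eval3_has_derivative_y q)
  have dz: "deriv (\<lambda>t. eval3 p x y t / eval3 q x y t) z =
      (eval3 (pderiv p) x y z * eval3 q x y z - eval3 p x y z * eval3 (pderiv q) x y z)
      / (eval3 q x y z * eval3 q x y z)"
    by (intro DERIV_imp_deriv DERIV_divide eval3_has_derivative_z q)
  show ?thesis
    unfolding vfX_def dx dy dz using q by (simp add: eval3_vf_der field_simps power2_eq_square)
qed

lemma rational_first_integral_wronskian:
  assumes "rational_first_integral a b c P Q"
  obtains p q where "P = eval3 p" and "Q = eval3 q" and "q \<noteq> 0"
    and "q * vf_der (of_real a) (of_real b) (of_real c) p
         - p * vf_der (of_real a) (of_real b) (of_real c) q = 0"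
proof -
  obtain p q where P: "P = eval3 p" and Q: "Q = eval3 q"
    using assms poly3_eval3 unfolding rational_first_integral_def by metis
  define W where "W = q * vf_der (of_real a) (of_real b) (of_real c) p
                      - p * vf_der (of_real a) (of_real b) (of_real c) q"
  have "q \<noteq> 0" using assms unfolding rational_first_integral_def Q by auto
  have "eval3 (W * q) x y z = 0" for x y z
  proof (cases "eval3 q x y z = 0")
    case False
    then have "eval3 W x y z / (eval3 q x y z)\<^sup>2 = 0"
      using assms vfX_eval3_divide[OF False, of a b c p]
      unfolding rational_first_integral_def P Q W_def by auto
    with False show ?thesis by simp
  qed simp
  then have "W * q = 0" by (rule eval3_eq_0_imp)
  with \<open>q \<noteq> 0\<close> have "W = 0" by simp
  with P Q \<open>q \<noteq> 0\<close> show ?thesis unfolding W_def by (rule that)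
qed

theorem theorem1p5:
  fixes a b c :: real
  assumes "a > 0" and "c > 0" and "b \<ge> 0"
  shows "\<not> (\<exists>P Q. rational_first_integral a b c P Q)"
proof
  assume "\<exists>P Q. rational_first_integral a b c P Q"
  then obtain P Q where H: "rational_first_integral a b c P Q" by blast
  then obtain p q where P: "P = eval3 p" and Q: "Q = eval3 q" and "q \<noteq> 0"
    and W: "q * vf_der (of_real a) (of_real b) (of_real c) p
            - p * vf_der (of_real a) (of_real b) (of_real c) q = 0"
    by (rule rational_first_integral_wronskian)
  have "complex_of_real a \<noteq> 0" using \<open>a > 0\<close> by simp
  then obtain \<mu> where "p = [:[:[:\<mu>:]:]:] * q"
    using vf_der_wronskian_eq_0_imp_const_multiple[OF _ \<open>q \<noteq> 0\<close> W] by blast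
  then have "\<forall>x y z. Q x y z \<noteq> 0 \<longrightarrow> P x y z / Q x y z = \<mu>"
    by (simp add: P Q eval3_def)
  with H show False unfolding rational_first_integral_def by blast
qed

end
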